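(* Let $W=\langle s_0,\dots,s_{n-1}\rangle$ be a finite string C-group, $\mathcal{P}(W)$ the regular polytope with automorphism group $W$, and $N\le W$ such that $\mathcal{P}(W)/N$ is a polytope admitting the flag action of $W$, with $N$ the stabilizer of the base flag $\Phi$. Let $u_1=1,u_2,\dots,u_r\in W$ be chosen so that the flags $\Phi^{u_1},\dots,\Phi^{u_r}$ are representatives of the $r$ orbits of the automorphism group of $\mathcal{P}(W)/N$ on its flags. Let $\sigma_1,\dots,\sigma_t$ be the distinct Coxeter elements of $W$, and let $m_{j,l}=|\{\Phi^{u_j}\alpha : \alpha\in\langle\sigma_l\rangle\}|$, the size of the orbit of $\Phi^{u_j}$ under the flag action of $\langle\sigma_l\rangle$. For $0\le i\le n-1$ let $H_i=\langle s_k : k\ne i\rangle$. If $(\sigma_l)^kH_i\cap N^{u_j}=\emptyset$ for all $i$, $j$, $l$ and all $1\le k<m_{j,l}$, then $\mathcal{P}(W)/N$ has acoptic Petrie schemes.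
   Context: Abstract polytopes are graded posets with least and greatest faces, all flags of equal length, strongly connected, satisfying the diamond condition. A string C-group is generated by distinct involutions $s_0,\dots,s_{n-1}$ with $(s_is_j)^2=1$ for $|i-j|>1$ and the intersection property. The flag action of $W$ on a polytope sends a flag $\Phi$ under $s_i$ to the unique flag $\Phi^{s_i}$ differing from $\Phi$ only in its face of rank $i$ (assumed to extend to a well-defined right action). A Coxeter element of $W$ is a product of the generators $s_0,\dots,s_{n-1}$ in which each generator appears exactly once (in some order). The exchange map $\varrho_i$ sends each flag to the flag differing from it only in rank $i$; a Petrie map $\sigma$ is a composition of $\varrho_0,\dots,\varrho_{n-1}$ with each appearing exactly once (e.g. the flag action of a Coxeter element). A Petrie sequence is a sequence of flags $(\dots,\Phi\sigma^{-1},\Phi,\Phi\sigma,\Phi\sigma^2,\dots)$ for a fixed Petrie map $\sigma$ and flag $\Phi$; its Petrie scheme is its shortest cyclic listing if the sequence is periodic, and the sequence itself otherwise. A polytope has acoptic Petrie schemes if each proper face (face other than the least and greatest) appears at most once in each Petrie scheme, i.e. among the flags of a Petrie scheme no proper face occurs in two different positions. $N^{u}=u^{-1}Nu$. *)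

theory Defs
  imports "HOL-Algebra.Algebra"
begin

definition string_C_group :: "('a, 'b) monoid_scheme \<Rightarrow> (nat \<Rightarrow> 'a) \<Rightarrow> nat \<Rightarrow> bool" where
  "string_C_group G s n \<longleftrightarrow>
     group G \<and>
     (\<forall>i<n. s i \<in> carrier G \<and> s i \<noteq> \<one>\<^bsub>G\<^esub> \<and> s i \<otimes>\<^bsub>G\<^esub> s i = \<one>\<^bsub>G\<^esub>) \<and>
     inj_on s {..<n} \<and>
     generate G (s ` {..<n}) = carrier G \<and>
     (\<forall>i<n. \<forall>j<n. (i + 1 < j \<or> j + 1 < i) \<longrightarrow>
        (s i \<otimes>\<^bsub>G\<^esub> s j) [^]\<^bsub>G\<^esub> (2::nat) = \<one>\<^bsub>G\<^esub>) \<and>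
     (\<forall>I J. I \<subseteq> {..<n} \<longrightarrow> J \<subseteq> {..<n} \<longrightarrow>
        generate G (s ` I) \<inter> generate G (s ` J) = generate G (s ` (I \<inter> J)))"

definition coxeter_element :: "('a, 'b) monoid_scheme \<Rightarrow> (nat \<Rightarrow> 'a) \<Rightarrow> nat \<Rightarrow> 'a \<Rightarrow> bool" where
  "coxeter_element G s n \<sigma> \<longleftrightarrow>
     (\<exists>\<pi>. bij_betw \<pi> {..<n} {..<n} \<and>
          \<sigma> = foldr (\<lambda>i acc. s (\<pi> i) \<otimes>\<^bsub>G\<^esub> acc) [0..<n] \<one>\<^bsub>G\<^esub>)"

text \<open>H_i = <s_k : k ~= i>; for i = -1 or i = n this is the whole group.\<close>
definition Hsub :: "('a, 'b) monoid_scheme \<Rightarrow> (nat \<Rightarrow> 'a) \<Rightarrow> nat \<Rightarrow> int \<Rightarrow> 'a set" where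
  "Hsub G s n i = generate G (s ` {k. k < n \<and> int k \<noteq> i})"

definition pchain :: "'f set \<Rightarrow> ('f \<Rightarrow> 'f \<Rightarrow> bool) \<Rightarrow> 'f set \<Rightarrow> bool" where
  "pchain Fs R C \<longleftrightarrow> C \<subseteq> Fs \<and> (\<forall>x\<in>C. \<forall>y\<in>C. R x y \<or> R y x)"

definition pflags :: "'f set \<Rightarrow> ('f \<Rightarrow> 'f \<Rightarrow> bool) \<Rightarrow> 'f set set" where
  "pflags Fs R = {C. pchain Fs R C \<and> (\<forall>D. pchain Fs R D \<and> C \<subseteq> D \<longrightarrow> D = C)}"

definition face_of_rank :: "('f \<Rightarrow> int) \<Rightarrow> 'f set \<Rightarrow> int \<Rightarrow> 'f" where
  "face_of_rank rk \<Phi> i = (THE x. x \<in> \<Phi> \<and> rk x = i)"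

definition polytope :: "'f set \<Rightarrow> ('f \<Rightarrow> 'f \<Rightarrow> bool) \<Rightarrow> ('f \<Rightarrow> int) \<Rightarrow> nat \<Rightarrow> bool" where
  "polytope Fs R rk n \<longleftrightarrow>
     (\<forall>x\<in>Fs. R x x) \<and>
     (\<forall>x\<in>Fs. \<forall>y\<in>Fs. R x y \<and> R y x \<longrightarrow> x = y) \<and>
     (\<forall>x\<in>Fs. \<forall>y\<in>Fs. \<forall>z\<in>Fs. R x y \<and> R y z \<longrightarrow> R x z) \<and>
     (\<forall>x\<in>Fs. -1 \<le> rk x \<and> rk x \<le> int n) \<and>
     (\<forall>x\<in>Fs. \<forall>y\<in>Fs. R x y \<and> x \<noteq> y \<longrightarrow> rk x < rk y) \<and>
     (\<exists>F0\<in>Fs. \<forall>x\<in>Fs. R F0 x) \<and>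
     (\<exists>Fn\<in>Fs. \<forall>x\<in>Fs. R x Fn) \<and>
     (\<forall>\<Phi>\<in>pflags Fs R. \<forall>i. -1 \<le> i \<and> i \<le> int n \<longrightarrow> (\<exists>!x. x \<in> \<Phi> \<and> rk x = i)) \<and>
     (\<forall>x\<in>Fs. \<forall>y\<in>Fs. R x y \<and> rk y = rk x + 2 \<longrightarrow>
        card {z\<in>Fs. R x z \<and> R z y \<and> z \<noteq> x \<and> z \<noteq> y} = 2) \<and>
     (\<forall>\<Phi>\<in>pflags Fs R. \<forall>\<Psi>\<in>pflags Fs R. \<exists>ls. ls \<noteq> [] \<and> hd ls = \<Phi> \<and> last ls = \<Psi> \<and>
        set ls \<subseteq> pflags Fs R \<and>
        (\<forall>k. k + 1 < length ls \<longrightarrow> card (ls ! k - ls ! (k + 1)) = 1) \<and>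
        (\<forall>\<Lambda>\<in>set ls. \<Phi> \<inter> \<Psi> \<subseteq> \<Lambda>))"

definition exch :: "'f set \<Rightarrow> ('f \<Rightarrow> 'f \<Rightarrow> bool) \<Rightarrow> ('f \<Rightarrow> int) \<Rightarrow> int \<Rightarrow> 'f set \<Rightarrow> 'f set" where
  "exch Fs R rk i \<Phi> =
     (THE \<Psi>. \<Psi> \<in> pflags Fs R \<and> \<Psi> \<noteq> \<Phi> \<and> (\<forall>x\<in>\<Phi>. rk x \<noteq> i \<longrightarrow> x \<in> \<Psi>))"

fun petrie_map :: "'f set \<Rightarrow> ('f \<Rightarrow> 'f \<Rightarrow> bool) \<Rightarrow> ('f \<Rightarrow> int) \<Rightarrow> (nat \<Rightarrow> nat) \<Rightarrow> nat \<Rightarrow> 'f set \<Rightarrow> 'f set" where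
  "petrie_map Fs R rk \<pi> 0 = id"
| "petrie_map Fs R rk \<pi> (Suc k) = exch Fs R rk (int (\<pi> k)) \<circ> petrie_map Fs R rk \<pi> k"

definition petrie_seq :: "'f set \<Rightarrow> ('f \<Rightarrow> 'f \<Rightarrow> bool) \<Rightarrow> ('f set \<Rightarrow> 'f set) \<Rightarrow> 'f set \<Rightarrow> int \<Rightarrow> 'f set" where
  "petrie_seq Fs R \<sigma> \<Phi> k =
     (if 0 \<le> k then (\<sigma> ^^ nat k) \<Phi> else (inv_into (pflags Fs R) \<sigma> ^^ nat (- k)) \<Phi>)"

text \<open>Acoptic Petrie schemes: no proper face occurs in two different positions
  (i.e. in two different pflags) of any Petrie sequence.\<close>
definition acoptic :: "'f set \<Rightarrow> ('f \<Rightarrow> 'f \<Rightarrow> bool) \<Rightarrow> ('f \<Rightarrow> int) \<Rightarrow> nat \<Rightarrow> bool" where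
  "acoptic Fs R rk n \<longleftrightarrow>
     (\<forall>\<pi>. bij_betw \<pi> {..<n} {..<n} \<longrightarrow>
       (\<forall>\<Phi>\<in>pflags Fs R. \<forall>a b :: int. \<forall>i :: int. 0 \<le> i \<and> i < int n \<longrightarrow>
          face_of_rank rk (petrie_seq Fs R (petrie_map Fs R rk \<pi> n) \<Phi> a) i =
          face_of_rank rk (petrie_seq Fs R (petrie_map Fs R rk \<pi> n) \<Phi> b) i \<longrightarrow>
          petrie_seq Fs R (petrie_map Fs R rk \<pi> n) \<Phi> a =
          petrie_seq Fs R (petrie_map Fs R rk \<pi> n) \<Phi> b))"

definition poset_aut :: "'f set \<Rightarrow> ('f \<Rightarrow> 'f \<Rightarrow> bool) \<Rightarrow> ('f \<Rightarrow> 'f) set" where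
  "poset_aut Fs R = {f. bij_betw f Fs Fs \<and> (\<forall>x\<in>Fs. \<forall>y\<in>Fs. R x y \<longleftrightarrow> R (f x) (f y))}"

definition flag_action :: "('a, 'b) monoid_scheme \<Rightarrow> (nat \<Rightarrow> 'a) \<Rightarrow> nat \<Rightarrow> 'f set \<Rightarrow>
    ('f \<Rightarrow> 'f \<Rightarrow> bool) \<Rightarrow> ('f \<Rightarrow> int) \<Rightarrow> ('f set \<Rightarrow> 'a \<Rightarrow> 'f set) \<Rightarrow> bool" where
  "flag_action G s n Fs R rk act \<longleftrightarrow>
     (\<forall>\<Psi>\<in>pflags Fs R. \<forall>g\<in>carrier G. act \<Psi> g \<in> pflags Fs R) \<and>
     (\<forall>\<Psi>\<in>pflags Fs R. act \<Psi> \<one>\<^bsub>G\<^esub> = \<Psi>) \<and>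
     (\<forall>\<Psi>\<in>pflags Fs R. \<forall>g\<in>carrier G. \<forall>h\<in>carrier G. act \<Psi> (g \<otimes>\<^bsub>G\<^esub> h) = act (act \<Psi> g) h) \<and>
     (\<forall>\<Psi>\<in>pflags Fs R. \<forall>i<n. act \<Psi> (s i) = exch Fs R rk (int i) \<Psi>)"

text \<open>Faces of rank i of P(W)/N: the orbits N w H_i (faces w H_i of P(W) modulo N).\<close>
definition qfaces :: "('a, 'b) monoid_scheme \<Rightarrow> (nat \<Rightarrow> 'a) \<Rightarrow> nat \<Rightarrow> 'a set \<Rightarrow> (int \<times> 'a set) set" where
  "qfaces G s n N = {(i, N <#>\<^bsub>G\<^esub> (w <#\<^bsub>G\<^esub> Hsub G s n i)) | i w. -1 \<le> i \<and> i \<le> int n \<and> w \<in> carrier G}"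

definition qle :: "int \<times> 'a set \<Rightarrow> int \<times> 'a set \<Rightarrow> bool" where
  "qle x y \<longleftrightarrow> fst x \<le> fst y \<and> snd x \<inter> snd y \<noteq> {}"

definition qflag :: "('a, 'b) monoid_scheme \<Rightarrow> (nat \<Rightarrow> 'a) \<Rightarrow> nat \<Rightarrow> 'a set \<Rightarrow> 'a \<Rightarrow> (int \<times> 'a set) set" where
  "qflag G s n N w = {(i, N <#>\<^bsub>G\<^esub> (w <#\<^bsub>G\<^esub> Hsub G s n i)) | i. -1 \<le> i \<and> i \<le> int n}"

end

theory Submission
  imports Defs
begin

text \<open>Every flag of \<open>P(W)/N\<close> has the form \<open>\<Phi>\<^sup>w = \<Phi>w\<close>, and the \<open>i\<close>-faces of \<open>\<Phi>\<^sup>u\<close> and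
  \<open>\<Phi>\<^sup>u\<^sup>x\<close> coincide iff \<open>u x \<in> N u H\<^sub>i\<close>, i.e. iff \<open>x H\<^sub>i\<close> meets \<open>N\<^sup>u\<close>. A Petrie map is the
  flag action of a Coxeter element \<open>\<sigma>\<close>, and automorphisms of \<open>P(W)/N\<close> commute with the
  flag action, so a Petrie sequence with a repeated \<open>i\<close>-face may be moved to one through some
  \<open>\<Phi>\<^sup>u\<^sup>j\<close> whose flags \<open>\<Phi>\<^sup>u\<^sup>j\<close> and \<open>\<Phi>\<^sup>u\<^sup>j\<sigma>\<^sup>k\<close> share that face. The orbit of \<open>\<Phi>\<^sup>u\<^sup>j\<close>
  under \<open>\<langle>\<sigma>\<rangle>\<close> has a period \<open>d \<le> m\<^sub>j\<^sub>,\<^sub>l\<close>; reducing \<open>k\<close> modulo \<open>d\<close>, the hypothesis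
  excludes every residue except \<open>0\<close>, where the two flags are equal.\<close>

definition strictly_between :: "'f set \<Rightarrow> ('f \<Rightarrow> 'f \<Rightarrow> bool) \<Rightarrow> 'f \<Rightarrow> 'f \<Rightarrow> 'f set" where
  "strictly_between Fs R x y = {z \<in> Fs. R x z \<and> R z y \<and> z \<noteq> x \<and> z \<noteq> y}"

lemma polytopeD:
  assumes "polytope Fs R rk n"
  shows "(\<forall>x\<in>Fs. R x x) \<and>
    (\<forall>x\<in>Fs. \<forall>y\<in>Fs. \<forall>z\<in>Fs. R x y \<and> R y z \<longrightarrow> R x z) \<and>
    (\<forall>x\<in>Fs. -1 \<le> rk x \<and> rk x \<le> int n) \<and>
    (\<forall>x\<in>Fs. \<forall>y\<in>Fs. R x y \<and> x \<noteq> y \<longrightarrow> rk x < rk y) \<and>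
    (\<forall>\<Phi>\<in>pflags Fs R. \<forall>i. -1 \<le> i \<and> i \<le> int n \<longrightarrow> (\<exists>!x. x \<in> \<Phi> \<and> rk x = i)) \<and>
    (\<forall>x\<in>Fs. \<forall>y\<in>Fs. R x y \<and> rk y = rk x + 2 \<longrightarrow> card (strictly_between Fs R x y) = 2)"
  using assms unfolding polytope_def strictly_between_def by (elim conjE) (intro conjI; assumption)

lemma polytope_refl: "polytope Fs R rk n \<Longrightarrow> x \<in> Fs \<Longrightarrow> R x x"
  using polytopeD[THEN conjunct1] by blast

lemma polytope_trans:
  "polytope Fs R rk n \<Longrightarrow> x \<in> Fs \<Longrightarrow> y \<in> Fs \<Longrightarrow> z \<in> Fs \<Longrightarrow> R x y \<Longrightarrow> R y z \<Longrightarrow> R x z"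
  using polytopeD[THEN conjunct2, THEN conjunct1] by blast

lemma polytope_rank_bounds:
  assumes "polytope Fs R rk n" "x \<in> Fs"
  shows "-1 \<le> rk x" "rk x \<le> int n"
  using polytopeD[OF assms(1), THEN conjunct2, THEN conjunct2, THEN conjunct1] assms(2) by blast+

lemma polytope_rank_less:
  "polytope Fs R rk n \<Longrightarrow> x \<in> Fs \<Longrightarrow> y \<in> Fs \<Longrightarrow> R x y \<Longrightarrow> x \<noteq> y \<Longrightarrow> rk x < rk y"
  using polytopeD[THEN conjunct2, THEN conjunct2, THEN conjunct2, THEN conjunct1] by blast

lemma polytope_flag_rank_ex1:
  "polytope Fs R rk n \<Longrightarrow> \<Phi> \<in> pflags Fs R \<Longrightarrow> -1 \<le> i \<Longrightarrow> i \<le> int n \<Longrightarrow> \<exists>!x. x \<in> \<Phi> \<and> rk x = i"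
  using polytopeD[THEN conjunct2, THEN conjunct2, THEN conjunct2, THEN conjunct2, THEN conjunct1]
  by blast

lemma polytope_diamond:
  "polytope Fs R rk n \<Longrightarrow> x \<in> Fs \<Longrightarrow> y \<in> Fs \<Longrightarrow> R x y \<Longrightarrow> rk y = rk x + 2 \<Longrightarrow>
    card (strictly_between Fs R x y) = 2"
  using polytopeD[THEN conjunct2, THEN conjunct2, THEN conjunct2, THEN conjunct2, THEN conjunct2]
  by blast

lemma pflags_subset: "\<Phi> \<in> pflags Fs R \<Longrightarrow> \<Phi> \<subseteq> Fs"
  unfolding pflags_def pchain_def by blast

lemma pflags_comparable: "\<Phi> \<in> pflags Fs R \<Longrightarrow> x \<in> \<Phi> \<Longrightarrow> y \<in> \<Phi> \<Longrightarrow> R x y \<or> R y x"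
  unfolding pflags_def pchain_def by blast

lemma pflags_maximal: "\<Phi> \<in> pflags Fs R \<Longrightarrow> pchain Fs R D \<Longrightarrow> \<Phi> \<subseteq> D \<Longrightarrow> D = \<Phi>"
  unfolding pflags_def by blast

lemma pflags_eq_of_subset: "\<Phi> \<in> pflags Fs R \<Longrightarrow> \<Psi> \<in> pflags Fs R \<Longrightarrow> \<Phi> \<subseteq> \<Psi> \<Longrightarrow> \<Phi> = \<Psi>"
  unfolding pflags_def by blast

lemma pchain_with_all_ranks_in_pflags:
  assumes P: "polytope Fs R rk n" and C: "pchain Fs R C"
    and ranks: "\<And>r. -1 \<le> r \<Longrightarrow> r \<le> int n \<Longrightarrow> \<exists>e\<in>C. rk e = r"
  shows "C \<in> pflags Fs R"
  unfolding pflags_def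
proof (intro CollectI conjI allI impI C)
  fix D assume D: "pchain Fs R D \<and> C \<subseteq> D"
  show "D = C"
  proof
    show "D \<subseteq> C"
    proof
      fix d assume d: "d \<in> D"
      have dF: "d \<in> Fs" using D d unfolding pchain_def by blast
      obtain e where e: "e \<in> C" "rk e = rk d"
        using ranks polytope_rank_bounds[OF P dF] by blast
      have eF: "e \<in> D" "e \<in> Fs" using e D C unfolding pchain_def by blast+
      have "R d e \<or> R e d" using D d eF unfolding pchain_def by blast
      then have "d = e" using polytope_rank_less[OF P] dF eF e by force
      then show "d \<in> C" using e by simp
    qed
  qed (use D in blast)
qed

lemma flag_face_unique:
  assumes P: "polytope Fs R rk n" and \<Phi>: "\<Phi> \<in> pflags Fs R"
    and x: "x \<in> \<Phi>" and y: "y \<in> \<Phi>" and rk: "rk x = rk y"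
  shows "x = y"
proof (rule ccontr)
  assume "x \<noteq> y"
  moreover have "x \<in> Fs" "y \<in> Fs" using pflags_subset[OF \<Phi>] x y by auto
  ultimately show False
    using pflags_comparable[OF \<Phi> x y] polytope_rank_less[OF P] rk by fastforce
qed

lemma flag_le_of_rank_le:
  assumes P: "polytope Fs R rk n" and \<Phi>: "\<Phi> \<in> pflags Fs R"
    and x: "x \<in> \<Phi>" and y: "y \<in> \<Phi>" and rk: "rk x \<le> rk y"
  shows "R x y"
proof (cases "x = y")
  case True
  then show ?thesis using polytope_refl[OF P] pflags_subset[OF \<Phi>] y by auto
next
  case False
  have "x \<in> Fs" "y \<in> Fs" using pflags_subset[OF \<Phi>] x y by auto
  then have "\<not> R y x" using polytope_rank_less[OF P] False rk by force
  then show ?thesis using pflags_comparable[OF \<Phi> x y] by blast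
qed

lemma flag_obtain_face:
  assumes "polytope Fs R rk n" "\<Phi> \<in> pflags Fs R" "-1 \<le> i" "i \<le> int n"
  obtains x where "x \<in> \<Phi>" "rk x = i"
  using polytope_flag_rank_ex1[OF assms] by blast

lemma face_of_rank_eq:
  assumes P: "polytope Fs R rk n" and \<Phi>: "\<Phi> \<in> pflags Fs R" and x: "x \<in> \<Phi>" "rk x = i"
  shows "face_of_rank rk \<Phi> i = x"
  unfolding face_of_rank_def
proof (rule the_equality)
  show "x \<in> \<Phi> \<and> rk x = i" using x by simp
  show "y = x" if "y \<in> \<Phi> \<and> rk y = i" for y
    using flag_face_unique[OF P \<Phi>] that x by simp
qed

lemma face_of_rank_mem:
  assumes P: "polytope Fs R rk n" and \<Phi>: "\<Phi> \<in> pflags Fs R" and i: "-1 \<le> i" "i \<le> int n"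
  shows "face_of_rank rk \<Phi> i \<in> \<Phi>" "rk (face_of_rank rk \<Phi> i) = i"
proof -
  obtain x where x: "x \<in> \<Phi>" "rk x = i" using flag_obtain_face[OF P \<Phi> i] .
  show "face_of_rank rk \<Phi> i \<in> \<Phi>" "rk (face_of_rank rk \<Phi> i) = i"
    using face_of_rank_eq[OF P \<Phi> x] x by simp_all
qed

lemma flag_obtain_diamond:
  assumes P: "polytope Fs R rk n" and \<Psi>: "\<Psi> \<in> pflags Fs R" and i: "0 \<le> i" "i < int n"
  obtains x y z where "x \<in> \<Psi>" "rk x = i - 1" "y \<in> \<Psi>" "rk y = i + 1" "z \<in> \<Psi>" "rk z = i"
    "z \<in> strictly_between Fs R x y" "card (strictly_between Fs R x y) = 2"
proof -
  obtain x where x: "x \<in> \<Psi>" "rk x = i - 1" using flag_obtain_face[OF P \<Psi>, of "i - 1"] i by auto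
  obtain y where y: "y \<in> \<Psi>" "rk y = i + 1" using flag_obtain_face[OF P \<Psi>, of "i + 1"] i by auto
  obtain z where z: "z \<in> \<Psi>" "rk z = i" using flag_obtain_face[OF P \<Psi>, of i] i by auto
  have F: "x \<in> Fs" "y \<in> Fs" "z \<in> Fs" using pflags_subset[OF \<Psi>] x y z by auto
  have "z \<in> strictly_between Fs R x y"
    unfolding strictly_between_def using flag_le_of_rank_le[OF P \<Psi>] x y z F by auto
  moreover have "card (strictly_between Fs R x y) = 2"
    using polytope_diamond[OF P F(1,2) flag_le_of_rank_le[OF P \<Psi> x(1) y(1)]] x y by simp
  ultimately show thesis using that x y z by blast
qed

lemma flag_swap_face:
  assumes P: "polytope Fs R rk n" and \<Psi>: "\<Psi> \<in> pflags Fs R"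
    and x: "x \<in> \<Psi>" "rk x = i - 1" and y: "y \<in> \<Psi>" "rk y = i + 1" and z: "z \<in> \<Psi>" "rk z = i"
    and z': "z' \<in> strictly_between Fs R x y"
  shows "rk z' = i" "\<Psi> - {z} \<union> {z'} \<in> pflags Fs R"
proof -
  have F: "x \<in> Fs" "y \<in> Fs" using pflags_subset[OF \<Psi>] x y by auto
  have z'F: "z' \<in> Fs" "R x z'" "R z' y" "z' \<noteq> x" "z' \<noteq> y"
    using z' unfolding strictly_between_def by auto
  show rz': "rk z' = i"
    using polytope_rank_less[OF P F(1) z'F(1)] polytope_rank_less[OF P z'F(1) F(2)] z'F x y by auto
  have cmp: "R e z' \<or> R z' e" if e: "e \<in> \<Psi> - {z}" for e
  proof -
    have eF: "e \<in> Fs" using e pflags_subset[OF \<Psi>] by auto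
    have "rk e \<noteq> i" using flag_face_unique[OF P \<Psi> _ z(1)] e z(2) by auto
    show ?thesis
    proof (cases "rk e < i")
      case True
      then have "R e x" using flag_le_of_rank_le[OF P \<Psi> _ x(1)] e x(2) by auto
      then show ?thesis using polytope_trans[OF P eF F(1) z'F(1)] z'F(2) by blast
    next
      case False
      then have "R y e" using flag_le_of_rank_le[OF P \<Psi> y(1)] e y(2) \<open>rk e \<noteq> i\<close> by auto
      then show ?thesis using polytope_trans[OF P z'F(1) F(2) eF] z'F(3) by blast
    qed
  qed
  have "pchain Fs R (\<Psi> - {z} \<union> {z'})"
    unfolding pchain_def
    using pflags_subset[OF \<Psi>] pflags_comparable[OF \<Psi>] polytope_refl[OF P z'F(1)] z'F(1) cmp
    by blast
  then show "\<Psi> - {z} \<union> {z'} \<in> pflags Fs R"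
  proof (rule pchain_with_all_ranks_in_pflags[OF P])
    fix r assume r: "-1 \<le> r" "r \<le> int n"
    obtain e where "e \<in> \<Psi>" "rk e = r" using flag_obtain_face[OF P \<Psi> r] .
    then show "\<exists>e\<in>\<Psi> - {z} \<union> {z'}. rk e = r" using rz' z by (cases "r = i") auto
  qed
qed

lemma flag_differing_in_rank:
  assumes P: "polytope Fs R rk n" and \<Psi>: "\<Psi> \<in> pflags Fs R"
    and x: "x \<in> \<Psi>" "rk x = i - 1" and y: "y \<in> \<Psi>" "rk y = i + 1" and z: "z \<in> \<Psi>" "rk z = i"
    and \<Psi>': "\<Psi>' \<in> pflags Fs R" "\<Psi>' \<noteq> \<Psi>" "\<forall>a\<in>\<Psi>. rk a \<noteq> i \<longrightarrow> a \<in> \<Psi>'"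
    and z': "z' \<in> \<Psi>'" "rk z' = i"
  shows "z' \<in> strictly_between Fs R x y" "\<Psi>' = \<Psi> - {z} \<union> {z'}" "z' \<noteq> z"
proof -
  have xy: "x \<in> \<Psi>'" "y \<in> \<Psi>'" using \<Psi>'(3) x y by auto
  have "z' \<in> Fs" using pflags_subset[OF \<Psi>'(1)] z' by auto
  then show between: "z' \<in> strictly_between Fs R x y"
    unfolding strictly_between_def using flag_le_of_rank_le[OF P \<Psi>'(1)] xy z' x y by auto
  have "\<Psi> - {z} \<subseteq> \<Psi>'" using \<Psi>'(3) flag_face_unique[OF P \<Psi> _ z(1)] z(2) by blast
  then have "\<Psi> - {z} \<union> {z'} \<subseteq> \<Psi>'" using z' by blast
  then show eq: "\<Psi>' = \<Psi> - {z} \<union> {z'}"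
    using pflags_eq_of_subset[OF flag_swap_face(2)[OF P \<Psi> x y z between] \<Psi>'(1)] by simp
  show "z' \<noteq> z" using eq \<Psi>'(2) z(1) by auto
qed

lemma flag_differing_in_rank_unique:
  assumes P: "polytope Fs R rk n" and \<Psi>: "\<Psi> \<in> pflags Fs R" and i: "0 \<le> i" "i < int n"
    and A: "\<Psi>1 \<in> pflags Fs R" "\<Psi>1 \<noteq> \<Psi>" "\<forall>a\<in>\<Psi>. rk a \<noteq> i \<longrightarrow> a \<in> \<Psi>1"
    and B: "\<Psi>2 \<in> pflags Fs R" "\<Psi>2 \<noteq> \<Psi>" "\<forall>a\<in>\<Psi>. rk a \<noteq> i \<longrightarrow> a \<in> \<Psi>2"
  shows "\<Psi>1 = \<Psi>2"
proof -
  obtain x y z where x: "x \<in> \<Psi>" "rk x = i - 1" and y: "y \<in> \<Psi>" "rk y = i + 1"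
    and z: "z \<in> \<Psi>" "rk z = i" and zD: "z \<in> strictly_between Fs R x y"
    and card2: "card (strictly_between Fs R x y) = 2"
    using flag_obtain_diamond[OF P \<Psi> i] .
  obtain z1 where z1: "z1 \<in> \<Psi>1" "rk z1 = i" using flag_obtain_face[OF P A(1), of i] i by auto
  obtain z2 where z2: "z2 \<in> \<Psi>2" "rk z2 = i" using flag_obtain_face[OF P B(1), of i] i by auto
  note S1 = flag_differing_in_rank[OF P \<Psi> x y z A z1]
  note S2 = flag_differing_in_rank[OF P \<Psi> x y z B z2]
  have "z1 = z2"
  proof (rule ccontr)
    assume "z1 \<noteq> z2"
    then have "card {z, z1, z2} = 3" using S1(3) S2(3) by auto
    moreover have "card {z, z1, z2} \<le> card (strictly_between Fs R x y)"
    proof (rule card_mono)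
      show "finite (strictly_between Fs R x y)" using card2 card.infinite by fastforce
      show "{z, z1, z2} \<subseteq> strictly_between Fs R x y" using zD S1(1) S2(1) by blast
    qed
    ultimately show False using card2 by simp
  qed
  then show ?thesis using S1(2) S2(2) by simp
qed

lemma flag_differing_in_rank_exists:
  assumes P: "polytope Fs R rk n" and \<Psi>: "\<Psi> \<in> pflags Fs R" and i: "0 \<le> i" "i < int n"
  shows "\<exists>\<Psi>'. \<Psi>' \<in> pflags Fs R \<and> \<Psi>' \<noteq> \<Psi> \<and> (\<forall>a\<in>\<Psi>. rk a \<noteq> i \<longrightarrow> a \<in> \<Psi>')"
proof -
  obtain x y z where x: "x \<in> \<Psi>" "rk x = i - 1" and y: "y \<in> \<Psi>" "rk y = i + 1"
    and z: "z \<in> \<Psi>" "rk z = i" and zD: "z \<in> strictly_between Fs R x y"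
    and card2: "card (strictly_between Fs R x y) = 2"
    using flag_obtain_diamond[OF P \<Psi> i] .
  have "strictly_between Fs R x y \<noteq> {z}" using card2 by auto
  then obtain z' where z': "z' \<in> strictly_between Fs R x y" "z' \<noteq> z" using zD by blast
  note swap = flag_swap_face[OF P \<Psi> x y z z'(1)]
  have "z' \<notin> \<Psi>" using flag_face_unique[OF P \<Psi> _ z(1)] swap(1) z(2) z'(2) by auto
  then have "\<Psi> - {z} \<union> {z'} \<noteq> \<Psi>" by auto
  then show ?thesis using swap(2) z by blast
qed

lemma exch_spec:
  assumes P: "polytope Fs R rk n" and \<Psi>: "\<Psi> \<in> pflags Fs R" and i: "0 \<le> i" "i < int n"
  shows "exch Fs R rk i \<Psi> \<in> pflags Fs R" "exch Fs R rk i \<Psi> \<noteq> \<Psi>"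
    "\<forall>a\<in>\<Psi>. rk a \<noteq> i \<longrightarrow> a \<in> exch Fs R rk i \<Psi>"
proof -
  let ?P = "\<lambda>\<Psi>'. \<Psi>' \<in> pflags Fs R \<and> \<Psi>' \<noteq> \<Psi> \<and> (\<forall>a\<in>\<Psi>. rk a \<noteq> i \<longrightarrow> a \<in> \<Psi>')"
  have "\<exists>!\<Psi>'. ?P \<Psi>'"
    using flag_differing_in_rank_exists[OF P \<Psi> i] flag_differing_in_rank_unique[OF P \<Psi> i] by blast
  then have "?P (exch Fs R rk i \<Psi>)" unfolding exch_def by (rule theI')
  then show "exch Fs R rk i \<Psi> \<in> pflags Fs R" "exch Fs R rk i \<Psi> \<noteq> \<Psi>"
    "\<forall>a\<in>\<Psi>. rk a \<noteq> i \<longrightarrow> a \<in> exch Fs R rk i \<Psi>"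
    by simp_all
qed

lemma exch_eqI:
  assumes P: "polytope Fs R rk n" and \<Psi>: "\<Psi> \<in> pflags Fs R" and i: "0 \<le> i" "i < int n"
    and \<Psi>': "\<Psi>' \<in> pflags Fs R" "\<Psi>' \<noteq> \<Psi>" "\<forall>a\<in>\<Psi>. rk a \<noteq> i \<longrightarrow> a \<in> \<Psi>'"
  shows "exch Fs R rk i \<Psi> = \<Psi>'"
  using flag_differing_in_rank_unique[OF P \<Psi> i exch_spec[OF P \<Psi> i] \<Psi>'] .

lemma face_not_mem_exch:
  assumes P: "polytope Fs R rk n" and \<Psi>: "\<Psi> \<in> pflags Fs R" and i: "0 \<le> i" "i < int n"
    and z: "z \<in> \<Psi>" "rk z = i"
  shows "z \<notin> exch Fs R rk i \<Psi>"
proof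
  assume "z \<in> exch Fs R rk i \<Psi>"
  then have "\<Psi> \<subseteq> exch Fs R rk i \<Psi>"
    using exch_spec(3)[OF P \<Psi> i] flag_face_unique[OF P \<Psi> _ z(1)] z(2) by blast
  then show False using pflags_eq_of_subset[OF \<Psi> exch_spec(1)[OF P \<Psi> i]] exch_spec(2)[OF P \<Psi> i] by simp
qed

lemma poset_autD:
  assumes "f \<in> poset_aut Fs R"
  shows "inj_on f Fs" "f ` Fs = Fs" "\<And>x y. x \<in> Fs \<Longrightarrow> y \<in> Fs \<Longrightarrow> R (f x) (f y) \<longleftrightarrow> R x y"
  using assms unfolding poset_aut_def bij_betw_def by auto

lemma poset_aut_image_pflags:
  assumes f: "f \<in> poset_aut Fs R" and \<Psi>: "\<Psi> \<in> pflags Fs R"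
  shows "f ` \<Psi> \<in> pflags Fs R"
proof -
  note A = poset_autD[OF f]
  have sub: "\<Psi> \<subseteq> Fs" using pflags_subset[OF \<Psi>] .
  have "pchain Fs R (f ` \<Psi>)"
    unfolding pchain_def
  proof (intro conjI ballI)
    show "f ` \<Psi> \<subseteq> Fs" using A(2) sub by blast
    fix a b assume "a \<in> f ` \<Psi>" "b \<in> f ` \<Psi>"
    then obtain x y where xy: "x \<in> \<Psi>" "y \<in> \<Psi>" and ab: "a = f x" "b = f y" by blast
    have "x \<in> Fs" "y \<in> Fs" using xy sub by auto
    then show "R a b \<or> R b a" using pflags_comparable[OF \<Psi> xy] A(3)[of x y] A(3)[of y x] ab by blast
  qed
  moreover have "D = f ` \<Psi>" if D: "pchain Fs R D" "f ` \<Psi> \<subseteq> D" for D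
  proof -
    let ?D' = "{x \<in> Fs. f x \<in> D}"
    have "pchain Fs R ?D'"
      unfolding pchain_def
    proof (intro conjI ballI)
      fix a b assume ab: "a \<in> ?D'" "b \<in> ?D'"
      then have "R (f a) (f b) \<or> R (f b) (f a)" using D(1) unfolding pchain_def by blast
      then show "R a b \<or> R b a" using A(3)[of a b] A(3)[of b a] ab by blast
    qed blast
    then have "?D' = \<Psi>" using pflags_maximal[OF \<Psi>] sub D(2) by blast
    moreover have "D \<subseteq> f ` ?D'"
    proof
      fix d assume "d \<in> D"
      moreover from this obtain x where "x \<in> Fs" "d = f x"
        using D(1) A(2) unfolding pchain_def by blast
      ultimately show "d \<in> f ` ?D'" by blast
    qed
    ultimately show ?thesis using D(2) by blast
  qed
  ultimately show ?thesis unfolding pflags_def by blast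
qed

lemma flag_card_below:
  assumes P: "polytope Fs R rk n" and \<Psi>: "\<Psi> \<in> pflags Fs R" and x: "x \<in> \<Psi>"
  shows "card {y \<in> \<Psi>. R y x \<and> y \<noteq> x} = nat (rk x + 1)"
proof -
  have sub: "\<Psi> \<subseteq> Fs" using pflags_subset[OF \<Psi>] .
  have xF: "x \<in> Fs" using sub x by blast
  have "R y x \<and> y \<noteq> x \<longleftrightarrow> rk y < rk x" if y: "y \<in> \<Psi>" for y
  proof
    assume "R y x \<and> y \<noteq> x"
    then show "rk y < rk x" using polytope_rank_less[OF P _ xF] y sub by blast
  next
    assume "rk y < rk x"
    then show "R y x \<and> y \<noteq> x" using flag_le_of_rank_le[OF P \<Psi> y x] by auto
  qed
  then have below: "{y \<in> \<Psi>. R y x \<and> y \<noteq> x} = {y \<in> \<Psi>. rk y < rk x}" by blast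
  have "bij_betw rk {y \<in> \<Psi>. rk y < rk x} {-1..<rk x}"
    unfolding bij_betw_def
  proof
    show "inj_on rk {y \<in> \<Psi>. rk y < rk x}"
      by (rule inj_onI) (use flag_face_unique[OF P \<Psi>] in blast)
    show "rk ` {y \<in> \<Psi>. rk y < rk x} = {-1..<rk x}"
    proof
      show "rk ` {y \<in> \<Psi>. rk y < rk x} \<subseteq> {-1..<rk x}"
        using polytope_rank_bounds(1)[OF P] sub by auto
      show "{-1..<rk x} \<subseteq> rk ` {y \<in> \<Psi>. rk y < rk x}"
      proof
        fix r assume r: "r \<in> {-1..<rk x}"
        then have "r \<le> int n" using polytope_rank_bounds(2)[OF P xF] by simp
        then obtain y where "y \<in> \<Psi>" "rk y = r" using flag_obtain_face[OF P \<Psi>] r by auto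
        then show "r \<in> rk ` {y \<in> \<Psi>. rk y < rk x}" using r by auto
      qed
    qed
  qed
  then have "card {y \<in> \<Psi>. rk y < rk x} = card {-1..<rk x}" by (rule bij_betw_same_card)
  then show ?thesis using below by simp
qed

lemma poset_aut_rank:
  assumes P: "polytope Fs R rk n" and f: "f \<in> poset_aut Fs R"
    and \<Psi>: "\<Psi> \<in> pflags Fs R" and x: "x \<in> \<Psi>"
  shows "rk (f x) = rk x"
proof -
  note A = poset_autD[OF f]
  have sub: "\<Psi> \<subseteq> Fs" using pflags_subset[OF \<Psi>] .
  have xF: "x \<in> Fs" using sub x by blast
  have "R (f y) (f x) \<and> f y \<noteq> f x \<longleftrightarrow> R y x \<and> y \<noteq> x" if "y \<in> \<Psi>" for y
    using A(3) inj_on_eq_iff[OF A(1)] sub xF that by auto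
  then have "f ` {y \<in> \<Psi>. R y x \<and> y \<noteq> x} = {y \<in> f ` \<Psi>. R y (f x) \<and> y \<noteq> f x}"
    by auto
  moreover have "card (f ` {y \<in> \<Psi>. R y x \<and> y \<noteq> x}) = card {y \<in> \<Psi>. R y x \<and> y \<noteq> x}"
    by (rule card_image, rule inj_on_subset[OF A(1)]) (use sub in blast)
  ultimately have "nat (rk (f x) + 1) = nat (rk x + 1)"
    using flag_card_below[OF P \<Psi> x] flag_card_below[OF P poset_aut_image_pflags[OF f \<Psi>]] x by simp
  moreover have "f x \<in> Fs" using A(2) xF by blast
  then have "-1 \<le> rk (f x)" "-1 \<le> rk x" using polytope_rank_bounds(1)[OF P] xF by blast+
  ultimately show ?thesis by simp
qed

lemma face_of_rank_poset_aut_image: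
  assumes P: "polytope Fs R rk n" and f: "f \<in> poset_aut Fs R" and \<Psi>: "\<Psi> \<in> pflags Fs R"
    and i: "-1 \<le> i" "i \<le> int n"
  shows "face_of_rank rk (f ` \<Psi>) i = f (face_of_rank rk \<Psi> i)"
  using face_of_rank_mem[OF P \<Psi> i] poset_aut_rank[OF P f \<Psi>]
  by (intro face_of_rank_eq[OF P poset_aut_image_pflags[OF f \<Psi>]]) auto

lemma face_of_rank_poset_aut_image_eq_iff:
  assumes P: "polytope Fs R rk n" and f: "f \<in> poset_aut Fs R"
    and \<Psi>: "\<Psi> \<in> pflags Fs R" and \<Psi>': "\<Psi>' \<in> pflags Fs R" and i: "-1 \<le> i" "i \<le> int n"
  shows "face_of_rank rk (f ` \<Psi>) i = face_of_rank rk (f ` \<Psi>') i \<longleftrightarrow>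
    face_of_rank rk \<Psi> i = face_of_rank rk \<Psi>' i"
proof -
  have "face_of_rank rk \<Psi> i \<in> Fs" "face_of_rank rk \<Psi>' i \<in> Fs"
    using face_of_rank_mem(1)[OF P _ i] pflags_subset \<Psi> \<Psi>' by blast+
  then show ?thesis
    using face_of_rank_poset_aut_image[OF P f _ i] \<Psi> \<Psi>' inj_on_eq_iff[OF poset_autD(1)[OF f]] by simp
qed

lemma poset_aut_exch:
  assumes P: "polytope Fs R rk n" and f: "f \<in> poset_aut Fs R" and \<Psi>: "\<Psi> \<in> pflags Fs R"
    and i: "0 \<le> i" "i < int n"
  shows "f ` exch Fs R rk i \<Psi> = exch Fs R rk i (f ` \<Psi>)"
proof -
  note A = poset_autD[OF f] and E = exch_spec[OF P \<Psi> i]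
  have sub: "\<Psi> \<subseteq> Fs" "exch Fs R rk i \<Psi> \<subseteq> Fs" using pflags_subset \<Psi> E(1) by blast+
  show ?thesis
  proof (rule exch_eqI[OF P poset_aut_image_pflags[OF f \<Psi>] i, symmetric])
    show "f ` exch Fs R rk i \<Psi> \<in> pflags Fs R" using poset_aut_image_pflags[OF f E(1)] .
    show "f ` exch Fs R rk i \<Psi> \<noteq> f ` \<Psi>" using inj_on_image_eq_iff[OF A(1) sub(2,1)] E(2) by blast
    show "\<forall>a\<in>f ` \<Psi>. rk a \<noteq> i \<longrightarrow> a \<in> f ` exch Fs R rk i \<Psi>"
      using poset_aut_rank[OF P f \<Psi>] E(3) by auto
  qed
qed

lemma (in group) l_coset_meets_conjugate_of_mem_double_coset:
  assumes N: "subgroup N G" and H: "subgroup H G" and u: "u \<in> carrier G" and x: "x \<in> carrier G"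
    and mem: "u \<otimes> x \<in> N <#> (u <# H)"
  shows "(x <# H) \<inter> ((inv u <# N) #> u) \<noteq> {}"
proof -
  obtain m h where mh: "m \<in> N" "h \<in> H" "u \<otimes> x = m \<otimes> (u \<otimes> h)"
    using mem unfolding set_mult_def l_coset_def by blast
  have c: "m \<in> carrier G" "h \<in> carrier G"
    using subgroup.mem_carrier[OF N mh(1)] subgroup.mem_carrier[OF H mh(2)] .
  have "x = inv u \<otimes> (m \<otimes> (u \<otimes> h))" using inv_solve_left[OF x u] mh(3) c u by simp
  then have "x \<otimes> inv h = (inv u \<otimes> m) \<otimes> u" using c u by (simp add: m_assoc)
  moreover have "x \<otimes> inv h \<in> x <# H"
    unfolding l_coset_def using subgroup.m_inv_closed[OF H mh(2)] by blast
  moreover have "(inv u \<otimes> m) \<otimes> u \<in> (inv u <# N) #> u"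
    unfolding r_coset_def l_coset_def using mh(1) by blast
  ultimately show ?thesis by auto
qed

definition coxeter_word :: "('a, 'b) monoid_scheme \<Rightarrow> (nat \<Rightarrow> 'a) \<Rightarrow> (nat \<Rightarrow> nat) \<Rightarrow> nat \<Rightarrow> 'a" where
  "coxeter_word G s \<pi> k = foldr (\<lambda>i acc. s (\<pi> i) \<otimes>\<^bsub>G\<^esub> acc) [0..<k] \<one>\<^bsub>G\<^esub>"

lemma (in monoid) foldr_mult_closed:
  "f ` set xs \<subseteq> carrier G \<Longrightarrow> foldr (\<lambda>i acc. f i \<otimes> acc) xs \<one> \<in> carrier G"
  by (induction xs) auto

lemma (in monoid) foldr_mult_eq:
  "f ` set xs \<subseteq> carrier G \<Longrightarrow> z \<in> carrier G \<Longrightarrow>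
    foldr (\<lambda>i acc. f i \<otimes> acc) xs z = foldr (\<lambda>i acc. f i \<otimes> acc) xs \<one> \<otimes> z"
  by (induction xs) (auto simp: m_assoc foldr_mult_closed)

lemma (in monoid) coxeter_word_closed:
  "(\<And>i. i < k \<Longrightarrow> s (\<pi> i) \<in> carrier G) \<Longrightarrow> coxeter_word G s \<pi> k \<in> carrier G"
  unfolding coxeter_word_def by (rule foldr_mult_closed) auto

lemma (in monoid) coxeter_word_Suc:
  assumes "\<And>i. i < Suc k \<Longrightarrow> s (\<pi> i) \<in> carrier G"
  shows "coxeter_word G s \<pi> (Suc k) = coxeter_word G s \<pi> k \<otimes> s (\<pi> k)"
proof -
  have gens: "(\<lambda>i. s (\<pi> i)) ` set [0..<k] \<subseteq> carrier G" using assms by auto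
  show ?thesis unfolding coxeter_word_def using foldr_mult_eq[OF gens, of "s (\<pi> k)"] assms by simp
qed

locale quotient_flag_action =
  fixes G (structure) and s :: "nat \<Rightarrow> 'a" and n :: nat and N :: "'a set"
    and act :: "(int \<times> 'a set) set \<Rightarrow> 'a \<Rightarrow> (int \<times> 'a set) set"
  assumes string_C: "string_C_group G s n"
    and N_subgroup: "subgroup N G"
    and quotient_polytope: "polytope (qfaces G s n N) qle fst n"
    and flag_act: "flag_action G s n (qfaces G s n N) qle fst act"
    and N_stabilizer: "N = {g \<in> carrier G. act (qflag G s n N \<one>) g = qflag G s n N \<one>}"
begin

abbreviation "Fs \<equiv> qfaces G s n N"
abbreviation "flags \<equiv> pflags Fs qle"
abbreviation "base_flag \<equiv> qflag G s n N \<one>"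
abbreviation "H i \<equiv> Hsub G s n i"

lemma is_group: "group G"
  using string_C unfolding string_C_group_def by (elim conjE)

sublocale group G by (rule is_group)

lemma gen_closed: "i < n \<Longrightarrow> s i \<in> carrier G"
  and gen_involution: "i < n \<Longrightarrow> s i \<otimes> s i = \<one>"
  using string_C[unfolded string_C_group_def, THEN conjunct2, THEN conjunct1] by blast+

lemma gen_inv: "i < n \<Longrightarrow> inv (s i) = s i"
  using inv_equality[OF gen_involution gen_closed gen_closed] .

lemma generate_gens: "generate G (s ` {..<n}) = carrier G"
  using string_C unfolding string_C_group_def by (elim conjE)

lemma Hsub_subgroup: "subgroup (H i) G"
  unfolding Hsub_def by (rule generate_is_subgroup) (use gen_closed in auto)

lemma gen_mem_Hsub: "k < n \<Longrightarrow> int k \<noteq> i \<Longrightarrow> s k \<in> H i"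
  unfolding Hsub_def by (rule generate.incl) auto

lemma act_in_pflags: "\<Psi> \<in> flags \<Longrightarrow> g \<in> carrier G \<Longrightarrow> act \<Psi> g \<in> flags"
  using flag_act[unfolded flag_action_def, THEN conjunct1] by blast

lemma act_one: "\<Psi> \<in> flags \<Longrightarrow> act \<Psi> \<one> = \<Psi>"
  using flag_act[unfolded flag_action_def, THEN conjunct2, THEN conjunct1] by blast

lemma act_mult:
  "\<Psi> \<in> flags \<Longrightarrow> g \<in> carrier G \<Longrightarrow> h \<in> carrier G \<Longrightarrow> act \<Psi> (g \<otimes> h) = act (act \<Psi> g) h"
  using flag_act[unfolded flag_action_def, THEN conjunct2, THEN conjunct2, THEN conjunct1] by blast

lemma act_gen: "\<Psi> \<in> flags \<Longrightarrow> i < n \<Longrightarrow> act \<Psi> (s i) = exch Fs qle fst (int i) \<Psi>"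
  using flag_act[unfolded flag_action_def, THEN conjunct2, THEN conjunct2, THEN conjunct2] by blast

lemma act_base_flag_of_mem_N: "m \<in> N \<Longrightarrow> act base_flag m = base_flag"
  using N_stabilizer by blast

lemma poset_aut_act:
  assumes f: "f \<in> poset_aut Fs qle" and \<Psi>: "\<Psi> \<in> flags" and g: "g \<in> carrier G"
  shows "f ` act \<Psi> g = act (f ` \<Psi>) g"
proof -
  have "g \<in> generate G (s ` {..<n})" using g generate_gens by simp
  then show ?thesis
    using \<Psi>
  proof (induction arbitrary: \<Psi>)
    case one
    then show ?case using act_one poset_aut_image_pflags[OF f] by simp
  next
    case (incl h)
    then obtain k where "k < n" "h = s k" by auto
    then show ?case
      using act_gen incl poset_aut_image_pflags[OF f] poset_aut_exch[OF quotient_polytope f] by simp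
  next
    case (inv h)
    then obtain k where "k < n" "h = s k" by auto
    then show ?case
      using act_gen inv gen_inv poset_aut_image_pflags[OF f] poset_aut_exch[OF quotient_polytope f]
      by simp
  next
    case (eng h1 h2)
    have c: "h1 \<in> carrier G" "h2 \<in> carrier G" using eng generate_gens by auto
    have "f ` act \<Psi> (h1 \<otimes> h2) = act (f ` act \<Psi> h1) h2"
      using act_mult eng.IH(2) act_in_pflags eng.prems c by simp
    also have "\<dots> = act (f ` \<Psi>) (h1 \<otimes> h2)"
      using eng.IH(1) act_mult poset_aut_image_pflags[OF f] eng.prems c by simp
    finally show ?case .
  qed
qed

lemma act_Hsub_keeps_face:
  assumes h: "h \<in> H i" and \<Psi>: "\<Psi> \<in> flags" and x: "x \<in> \<Psi>" "fst x = i"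
  shows "x \<in> act \<Psi> h"
  using h \<Psi> x unfolding Hsub_def
proof (induction arbitrary: \<Psi>)
  case one
  then show ?case using act_one by simp
next
  case (incl h)
  then obtain k where "k < n" "int k \<noteq> i" "h = s k" by auto
  then show ?case using act_gen incl exch_spec(3)[OF quotient_polytope incl.prems(1), of "int k"] by auto
next
  case (inv h)
  then obtain k where "k < n" "int k \<noteq> i" "h = s k" by auto
  then show ?case
    using act_gen inv gen_inv exch_spec(3)[OF quotient_polytope inv.prems(1), of "int k"] by auto
next
  case (eng h1 h2)
  have "s ` {k. k < n \<and> int k \<noteq> i} \<subseteq> carrier G" using gen_closed by auto
  then have c: "h1 \<in> carrier G" "h2 \<in> carrier G" using eng generate_in_carrier by auto
  have "x \<in> act (act \<Psi> h1) h2" using eng act_in_pflags c by blast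
  then show ?case using act_mult eng.prems c by simp
qed

lemma mem_double_coset: "w \<in> carrier G \<Longrightarrow> w \<in> N <#> (w <# H i)"
  unfolding set_mult_def l_coset_def
  using subgroup.one_closed[OF N_subgroup] subgroup.one_closed[OF Hsub_subgroup] by force

lemma qflag_in_pflags:
  assumes w: "w \<in> carrier G"
  shows "qflag G s n N w \<in> flags"
proof (rule pchain_with_all_ranks_in_pflags[OF quotient_polytope])
  show "pchain Fs qle (qflag G s n N w)"
    unfolding pchain_def qflag_def qfaces_def qle_def using w mem_double_coset[OF w] by (auto, blast+)
  show "\<exists>e\<in>qflag G s n N w. fst e = r" if "-1 \<le> r" "r \<le> int n" for r
    using that unfolding qflag_def by auto
qed

lemma face_of_rank_qflag:
  assumes w: "w \<in> carrier G" and i: "-1 \<le> i" "i \<le> int n"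
  shows "face_of_rank fst (qflag G s n N w) i = (i, N <#> (w <# H i))"
  by (rule face_of_rank_eq[OF quotient_polytope qflag_in_pflags[OF w]]) (use i in \<open>auto simp: qflag_def\<close>)

text \<open>If the two flags were equal, \<open>w s\<^sub>i = m w h\<close> with \<open>m \<in> N\<close>, \<open>h \<in> H\<^sub>i\<close>, so the exchange \<open>\<Phi>\<^sup>w s\<^sub>i\<close>
  would equal \<open>\<Phi>\<^sup>w h\<close>, which keeps the \<open>i\<close>-face of \<open>\<Phi>\<^sup>w\<close>.\<close>
lemma qflag_mult_gen_ne:
  assumes w: "w \<in> carrier G" and hw: "act base_flag w = qflag G s n N w" and i: "i < n"
  shows "qflag G s n N (w \<otimes> s i) \<noteq> qflag G s n N w"
proof
  let ?Q = "qflag G s n N w"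
  assume eq: "qflag G s n N (w \<otimes> s i) = ?Q"
  have c: "s i \<in> carrier G" "w \<otimes> s i \<in> carrier G" using gen_closed[OF i] w by auto
  have ii: "-1 \<le> int i" "int i \<le> int n" "0 \<le> int i" "int i < int n" using i by auto
  have "N <#> ((w \<otimes> s i) <# H (int i)) = N <#> (w <# H (int i))"
    using arg_cong[OF eq, of "\<lambda>\<Phi>. face_of_rank fst \<Phi> (int i)"] face_of_rank_qflag c(2) w ii
    by simp
  then obtain m h where mh: "m \<in> N" "h \<in> H (int i)" "w \<otimes> s i = m \<otimes> (w \<otimes> h)"
    using mem_double_coset[OF c(2), of "int i"] unfolding set_mult_def l_coset_def by auto
  have mc: "m \<in> carrier G" using subgroup.mem_carrier[OF N_subgroup mh(1)] .
  have hc: "h \<in> carrier G" using subgroup.mem_carrier[OF Hsub_subgroup mh(2)] .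
  have base: "base_flag \<in> flags" using qflag_in_pflags by simp
  have Q: "?Q \<in> flags" using qflag_in_pflags[OF w] .
  have "exch Fs qle fst (int i) ?Q = act base_flag (w \<otimes> s i)"
    using act_mult[OF base w c(1)] hw act_gen[OF Q i] by simp
  also have "\<dots> = act (act base_flag m) (w \<otimes> h)" using mh(3) act_mult[OF base mc] w hc by simp
  also have "\<dots> = act ?Q h" using act_base_flag_of_mem_N[OF mh(1)] act_mult[OF base w hc] hw by simp
  finally have "(int i, N <#> (w <# H (int i))) \<in> exch Fs qle fst (int i) ?Q"
    using act_Hsub_keeps_face[OF mh(2) Q] i unfolding qflag_def by auto
  moreover have "(int i, N <#> (w <# H (int i))) \<in> ?Q" using ii unfolding qflag_def by auto
  ultimately show False using face_not_mem_exch[OF quotient_polytope Q ii(3,4)] by auto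
qed

lemma act_base_flag_mult_gen:
  assumes w: "w \<in> carrier G" and hw: "act base_flag w = qflag G s n N w" and i: "i < n"
  shows "act base_flag (w \<otimes> s i) = qflag G s n N (w \<otimes> s i)"
proof -
  let ?Q = "qflag G s n N w" and ?Q' = "qflag G s n N (w \<otimes> s i)"
  have c: "s i \<in> carrier G" "w \<otimes> s i \<in> carrier G" using gen_closed[OF i] w by auto
  have Q: "?Q \<in> flags" using qflag_in_pflags[OF w] .
  have ii: "0 \<le> int i" "int i < int n" using i by auto
  have "\<forall>a\<in>?Q. fst a \<noteq> int i \<longrightarrow> a \<in> ?Q'"
  proof (intro ballI impI)
    fix a assume a: "a \<in> ?Q" "fst a \<noteq> int i"
    then obtain j where j: "a = (j, N <#> (w <# H j))" "-1 \<le> j" "j \<le> int n"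
      unfolding qflag_def by auto
    have "s i \<in> H j" using gen_mem_Hsub[OF i] a j by simp
    then have "s i <# H j = H j" by (rule coset_join3[OF c(1) Hsub_subgroup])
    then have "(w \<otimes> s i) <# H j = w <# H j"
      using lcos_m_assoc[OF subgroup.subset[OF Hsub_subgroup[of j]] w c(1)] by simp
    then show "a \<in> ?Q'" using j unfolding qflag_def by auto
  qed
  then have "exch Fs qle fst (int i) ?Q = ?Q'"
    using exch_eqI[OF quotient_polytope Q ii qflag_in_pflags[OF c(2)]] qflag_mult_gen_ne[OF w hw i]
    by blast
  then show ?thesis
    using act_mult[OF qflag_in_pflags[OF one_closed] w c(1)] hw act_gen[OF Q i] by simp
qed

lemma act_base_flag:
  assumes g: "g \<in> carrier G"
  shows "act base_flag g = qflag G s n N g"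
proof -
  have "act base_flag (w \<otimes> g) = qflag G s n N (w \<otimes> g)"
    if "g \<in> generate G (s ` {..<n})" "w \<in> carrier G" "act base_flag w = qflag G s n N w" for g w
    using that
  proof (induction arbitrary: w)
    case one
    then show ?case by simp
  next
    case (incl h)
    then show ?case using act_base_flag_mult_gen by auto
  next
    case (inv h)
    then show ?case using act_base_flag_mult_gen gen_inv by auto
  next
    case (eng h1 h2)
    have c: "h1 \<in> carrier G" "h2 \<in> carrier G" using eng generate_gens by auto
    have "act base_flag ((w \<otimes> h1) \<otimes> h2) = qflag G s n N ((w \<otimes> h1) \<otimes> h2)"
      using eng.IH eng.prems c by simp
    then show ?case using m_assoc eng.prems c by simp
  qed
  from this[of g \<one>] show ?thesis
    using g generate_gens act_one[OF qflag_in_pflags[OF one_closed]] by simp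
qed

lemma act_act_inv: "\<Psi> \<in> flags \<Longrightarrow> g \<in> carrier G \<Longrightarrow> act (act \<Psi> g) (inv g) = \<Psi>"
  using act_mult[symmetric] act_one by simp

lemma petrie_map_eq_act:
  assumes \<pi>: "bij_betw \<pi> {..<n} {..<n}" and \<Psi>: "\<Psi> \<in> flags"
  shows "k \<le> n \<Longrightarrow> petrie_map Fs qle fst \<pi> k \<Psi> = act \<Psi> (coxeter_word G s \<pi> k)"
proof (induction k)
  case 0
  then show ?case using act_one[OF \<Psi>] by (simp add: coxeter_word_def)
next
  case (Suc k)
  have gens: "s (\<pi> i) \<in> carrier G" if "i < n" for i using gen_closed bij_betwE[OF \<pi>] that by blast
  have c: "coxeter_word G s \<pi> k \<in> carrier G" using coxeter_word_closed gens Suc.prems by simp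
  have "petrie_map Fs qle fst \<pi> (Suc k) \<Psi> = exch Fs qle fst (int (\<pi> k)) (act \<Psi> (coxeter_word G s \<pi> k))"
    using Suc by simp
  also have "\<dots> = act \<Psi> (coxeter_word G s \<pi> k \<otimes> s (\<pi> k))"
    using act_gen[OF act_in_pflags[OF \<Psi> c]] act_mult[OF \<Psi> c] gens bij_betwE[OF \<pi>] Suc.prems by simp
  finally show ?case using coxeter_word_Suc gens Suc.prems by simp
qed

lemma funpow_eq_act_pow:
  assumes g: "g \<in> carrier G" and P: "\<forall>\<Psi>\<in>flags. P \<Psi> = act \<Psi> g" and \<Psi>: "\<Psi> \<in> flags"
  shows "(P ^^ m) \<Psi> = act \<Psi> (g [^] m)"
proof (induction m)
  case 0
  then show ?case using act_one[OF \<Psi>] by simp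
next
  case (Suc m)
  then show ?case using P act_in_pflags[OF \<Psi>] act_mult[OF \<Psi>] g by simp
qed

lemma petrie_seq_eq_act_pow:
  assumes \<sigma>: "\<sigma> \<in> carrier G" and P: "\<forall>\<Psi>\<in>flags. P \<Psi> = act \<Psi> \<sigma>" and \<Psi>: "\<Psi> \<in> flags"
  shows "petrie_seq Fs qle P \<Psi> k = act \<Psi> (\<sigma> [^] k)"
proof (cases "0 \<le> k")
  case True
  then show ?thesis
    unfolding petrie_seq_def using funpow_eq_act_pow[OF \<sigma> P \<Psi>] pow_nat[OF True] by simp
next
  case False
  have "inv_into flags P \<Phi> = act \<Phi> (inv \<sigma>)" if \<Phi>: "\<Phi> \<in> flags" for \<Phi>
  proof (rule inv_into_f_eq)
    show "inj_on P flags" using P act_act_inv \<sigma> by (metis inj_onI)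
    show "act \<Phi> (inv \<sigma>) \<in> flags" using act_in_pflags \<Phi> \<sigma> by simp
    show "P (act \<Phi> (inv \<sigma>)) = \<Phi>"
      using P act_in_pflags act_act_inv[of \<Phi> "inv \<sigma>"] \<Phi> \<sigma> by simp
  qed
  then have "(inv_into flags P ^^ nat (- k)) \<Psi> = act \<Psi> (inv \<sigma> [^] nat (- k))"
    using funpow_eq_act_pow[OF inv_closed[OF \<sigma>] _ \<Psi>] by blast
  also have "\<dots> = act \<Psi> (\<sigma> [^] k)"
    using False nat_pow_inv[OF \<sigma>] int_pow_def2[of G \<sigma> k] by simp
  finally show ?thesis unfolding petrie_seq_def using False by simp
qed

lemma coxeter_word_in_carrier:
  "bij_betw \<pi> {..<n} {..<n} \<Longrightarrow> coxeter_word G s \<pi> n \<in> carrier G"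
  using coxeter_word_closed gen_closed bij_betwE by blast

lemma petrie_seq_coxeter:
  assumes \<pi>: "bij_betw \<pi> {..<n} {..<n}" and \<Phi>: "\<Phi> \<in> flags"
  shows "petrie_seq Fs qle (petrie_map Fs qle fst \<pi> n) \<Phi> k = act \<Phi> (coxeter_word G s \<pi> n [^] k)"
proof (rule petrie_seq_eq_act_pow[OF coxeter_word_in_carrier[OF \<pi>] _ \<Phi>])
  show "\<forall>\<Psi>\<in>flags. petrie_map Fs qle fst \<pi> n \<Psi> = act \<Psi> (coxeter_word G s \<pi> n)"
    using petrie_map_eq_act[OF \<pi>] by blast
qed

lemma petrie_seq_coxeter_diff:
  assumes \<pi>: "bij_betw \<pi> {..<n} {..<n}" and \<Phi>: "\<Phi> \<in> flags"
  shows "petrie_seq Fs qle (petrie_map Fs qle fst \<pi> n) \<Phi> b =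
    act (petrie_seq Fs qle (petrie_map Fs qle fst \<pi> n) \<Phi> a) (coxeter_word G s \<pi> n [^] (b - a))"
proof -
  let ?\<sigma> = "coxeter_word G s \<pi> n"
  have \<sigma>: "?\<sigma> \<in> carrier G" using coxeter_word_in_carrier[OF \<pi>] .
  have "?\<sigma> [^] b = ?\<sigma> [^] a \<otimes> ?\<sigma> [^] (b - a)" using int_pow_mult[OF \<sigma>, of a "b - a"] by simp
  then show ?thesis using petrie_seq_coxeter[OF \<pi> \<Phi>] act_mult[OF \<Phi>] \<sigma> by simp
qed


lemma stabilizer_subgroup:
  assumes \<Psi>: "\<Psi> \<in> flags"
  shows "subgroup {g \<in> carrier G. act \<Psi> g = \<Psi>} G"
proof (rule subgroupI)
  fix a b assume a: "a \<in> {g \<in> carrier G. act \<Psi> g = \<Psi>}" and b: "b \<in> {g \<in> carrier G. act \<Psi> g = \<Psi>}"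
  then show "inv a \<in> {g \<in> carrier G. act \<Psi> g = \<Psi>}" using act_act_inv[OF \<Psi>] by force
  show "a \<otimes> b \<in> {g \<in> carrier G. act \<Psi> g = \<Psi>}" using a b act_mult[OF \<Psi>] by simp
qed (use act_one[OF \<Psi>] in auto)

lemma act_pow_period:
  assumes fin: "finite (carrier G)" and \<sigma>: "\<sigma> \<in> carrier G" and \<Psi>: "\<Psi> \<in> flags"
  obtains d :: nat where "0 < d" "d \<le> card {act \<Psi> \<alpha> | \<alpha>. \<alpha> \<in> generate G {\<sigma>}}" "act \<Psi> (\<sigma> [^] d) = \<Psi>"
proof -
  let ?orbit = "{act \<Psi> \<alpha> | \<alpha>. \<alpha> \<in> generate G {\<sigma>}}"
  let ?m = "card ?orbit" and ?orb = "\<lambda>p::nat. act \<Psi> (\<sigma> [^] p)"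
  have "finite (generate G {\<sigma>})" using fin generate_incl[of "{\<sigma>}"] \<sigma> finite_subset by auto
  moreover have "?orbit = (act \<Psi>) ` generate G {\<sigma>}" by auto
  ultimately have fin_orbit: "finite ?orbit" by simp
  have orb: "?orb ` {0..?m} \<subseteq> ?orbit"
  proof (rule image_subsetI)
    fix p :: nat
    have "\<sigma> [^] int p \<in> generate G {\<sigma>}" using generate_pow[OF \<sigma>] by blast
    then have "\<sigma> [^] p \<in> generate G {\<sigma>}" by (simp add: int_pow_int)
    then show "?orb p \<in> ?orbit" by blast
  qed
  have "\<not> inj_on ?orb {0..?m}"
  proof
    assume "inj_on ?orb {0..?m}"
    then have "card {0..?m} \<le> ?m" by (rule card_inj_on_le[OF _ orb fin_orbit])
    then show False by simp
  qed
  then obtain a b where ab: "a \<in> {0..?m}" "b \<in> {0..?m}" "a \<noteq> b" "?orb a = ?orb b"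
    unfolding inj_on_def by blast
  define p q where "p = min a b" and "q = max a b"
  have pq: "p < q" "q \<le> ?m" "?orb p = ?orb q"
    using ab unfolding p_def q_def by (auto simp: min_def max_def)
  have "\<sigma> [^] q = \<sigma> [^] (q - p) \<otimes> \<sigma> [^] p" using pq(1) nat_pow_mult[OF \<sigma>] by simp
  then have "act \<Psi> (\<sigma> [^] (q - p)) = act (?orb q) (inv (\<sigma> [^] p))"
    using act_mult[OF \<Psi>] act_act_inv[OF act_in_pflags[OF \<Psi>]] \<sigma> by simp
  also have "\<dots> = \<Psi>" using pq(3)[symmetric] act_act_inv[OF \<Psi>] \<sigma> by simp
  finally show thesis using pq by (intro that) auto
qed

lemma act_int_pow_mod:
  assumes \<sigma>: "\<sigma> \<in> carrier G" and \<Psi>: "\<Psi> \<in> flags" and period: "act \<Psi> (\<sigma> [^] d) = \<Psi>"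
  shows "act \<Psi> (\<sigma> [^] k) = act \<Psi> (\<sigma> [^] (k mod int d))"
proof -
  let ?S = "{g \<in> carrier G. act \<Psi> g = \<Psi>}"
  have "\<sigma> [^] (int d * (k div int d)) = (\<sigma> [^] d) [^] (k div int d)"
    using int_pow_pow[OF \<sigma>] int_pow_int by metis
  moreover have "(\<sigma> [^] d) [^] (k div int d) \<in> ?S"
    using subgroup_int_pow_closed[OF stabilizer_subgroup[OF \<Psi>]] period \<sigma> by simp
  ultimately have "act \<Psi> (\<sigma> [^] (int d * (k div int d))) = \<Psi>" by simp
  moreover have "\<sigma> [^] k = \<sigma> [^] (int d * (k div int d)) \<otimes> \<sigma> [^] (k mod int d)"
    using int_pow_mult[OF \<sigma>] by (metis div_mult_mod_eq mult.commute)
  ultimately show ?thesis using act_mult[OF \<Psi>] \<sigma> by simp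
qed

lemma l_coset_meets_conjugate_of_face_eq:
  assumes u: "u \<in> carrier G" and x: "x \<in> carrier G" and i: "-1 \<le> i" "i \<le> int n"
    and face: "face_of_rank fst (act (act base_flag u) x) i = face_of_rank fst (act base_flag u) i"
  shows "(x <# H i) \<inter> ((inv u <# N) #> u) \<noteq> {}"
proof (rule l_coset_meets_conjugate_of_mem_double_coset[OF N_subgroup Hsub_subgroup u x])
  have "act (act base_flag u) x = qflag G s n N (u \<otimes> x)"
    using act_mult[OF qflag_in_pflags[OF one_closed] u x] act_base_flag u x by simp
  then have "N <#> ((u \<otimes> x) <# H i) = N <#> (u <# H i)"
    using face face_of_rank_qflag i u x act_base_flag[OF u] by simp
  then show "u \<otimes> x \<in> N <#> (u <# H i)" using mem_double_coset u x by blast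
qed

lemma act_base_flag_pow_fixed_of_face_eq:
  assumes fin: "finite (carrier G)" and u: "u \<in> carrier G" and \<sigma>: "\<sigma> \<in> carrier G" and i: "i < n"
    and disjoint: "\<forall>k::nat. 1 \<le> k \<and> k < card {act (act base_flag u) \<alpha> | \<alpha>. \<alpha> \<in> generate G {\<sigma>}} \<longrightarrow>
      ((\<sigma> [^] k) <# H (int i)) \<inter> ((inv u <# N) #> u) = {}"
    and face: "face_of_rank fst (act (act base_flag u) (\<sigma> [^] k)) (int i) =
      face_of_rank fst (act base_flag u) (int i)"
  shows "act (act base_flag u) (\<sigma> [^] (k::int)) = act base_flag u"
proof -
  let ?\<Psi> = "act base_flag u"
  have \<Psi>: "?\<Psi> \<in> flags" using act_in_pflags qflag_in_pflags u by simp
  obtain d where d: "0 < d" "d \<le> card {act ?\<Psi> \<alpha> | \<alpha>. \<alpha> \<in> generate G {\<sigma>}}" "act ?\<Psi> (\<sigma> [^] d) = ?\<Psi>"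
    using act_pow_period[OF fin \<sigma> \<Psi>] .
  define k' where "k' = nat (k mod int d)"
  have reduce: "act ?\<Psi> (\<sigma> [^] k) = act ?\<Psi> (\<sigma> [^] k')"
    using act_int_pow_mod[OF \<sigma> \<Psi> d(3)] d(1) int_pow_int unfolding k'_def by simp
  show ?thesis
  proof (cases "k' = 0")
    case True
    then show ?thesis using reduce act_one[OF \<Psi>] by simp
  next
    case False
    have "k' < d" using d(1) unfolding k'_def by (simp add: nat_less_iff)
    then have "((\<sigma> [^] k') <# H (int i)) \<inter> ((inv u <# N) #> u) = {}"
      using disjoint False d(2) by simp
    moreover have "face_of_rank fst (act ?\<Psi> (\<sigma> [^] k')) (int i) = face_of_rank fst ?\<Psi> (int i)"
      using face reduce by simp
    ultimately show ?thesis using l_coset_meets_conjugate_of_face_eq[OF u nat_pow_closed[OF \<sigma>]] i by simp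
  qed
qed

lemma poset_aut_act_pow_fixed_of_face_eq:
  assumes fin: "finite (carrier G)" and u: "u \<in> carrier G" and \<sigma>: "\<sigma> \<in> carrier G" and i: "i < n"
    and f: "f \<in> poset_aut Fs qle"
    and disjoint: "\<forall>k::nat. 1 \<le> k \<and> k < card {act (act base_flag u) \<alpha> | \<alpha>. \<alpha> \<in> generate G {\<sigma>}} \<longrightarrow>
      ((\<sigma> [^] k) <# H (int i)) \<inter> ((inv u <# N) #> u) = {}"
    and face: "face_of_rank fst (act (f ` act base_flag u) (\<sigma> [^] k)) (int i) =
      face_of_rank fst (f ` act base_flag u) (int i)"
  shows "act (f ` act base_flag u) (\<sigma> [^] (k::int)) = f ` act base_flag u"
proof -
  have \<Psi>: "act base_flag u \<in> flags" using act_in_pflags qflag_in_pflags u by simp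
  have \<Psi>k: "act (act base_flag u) (\<sigma> [^] k) \<in> flags" using act_in_pflags[OF \<Psi>] \<sigma> by simp
  have "face_of_rank fst (act (act base_flag u) (\<sigma> [^] k)) (int i) =
      face_of_rank fst (act base_flag u) (int i)"
    using face face_of_rank_poset_aut_image_eq_iff[OF quotient_polytope f \<Psi>k \<Psi>, of "int i"] i
      poset_aut_act[OF f \<Psi>] \<sigma> by simp
  then have "act (act base_flag u) (\<sigma> [^] k) = act base_flag u"
    by (rule act_base_flag_pow_fixed_of_face_eq[OF fin u \<sigma> i disjoint])
  then show ?thesis using poset_aut_act[OF f \<Psi> int_pow_closed[OF \<sigma>], symmetric] by simp
qed

end

theorem theorem7:
  fixes G :: "('a, 'b) monoid_scheme" and s :: "nat \<Rightarrow> 'a" and n :: nat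
    and N :: "'a set" and act :: "(int \<times> 'a set) set \<Rightarrow> 'a \<Rightarrow> (int \<times> 'a set) set"
    and u :: "nat \<Rightarrow> 'a" and r :: nat
  assumes Wstr: "string_C_group G s n"
    and Wfin: "finite (carrier G)"
    and Nsub: "subgroup N G"
    and Qpoly: "polytope (qfaces G s n N) qle fst n"
    and Qact: "flag_action G s n (qfaces G s n N) qle fst act"
    and Nstab: "N = {g \<in> carrier G. act (qflag G s n N \<one>\<^bsub>G\<^esub>) g = qflag G s n N \<one>\<^bsub>G\<^esub>}"
    and u1: "u 1 = \<one>\<^bsub>G\<^esub>"
    and uG: "\<forall>j\<in>{1..r}. u j \<in> carrier G"
    and reps: "\<forall>\<Psi>\<in>pflags (qfaces G s n N) qle. \<exists>!j. j \<in> {1..r} \<and>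
               \<Psi> \<in> {f ` act (qflag G s n N \<one>\<^bsub>G\<^esub>) (u j) | f. f \<in> poset_aut (qfaces G s n N) qle}"
    and cond: "\<forall>\<sigma>. coxeter_element G s n \<sigma> \<longrightarrow>
               (\<forall>i<n. \<forall>j\<in>{1..r}. \<forall>k::nat.
                  1 \<le> k \<and> k < card {act (act (qflag G s n N \<one>\<^bsub>G\<^esub>) (u j)) \<alpha> | \<alpha>. \<alpha> \<in> generate G {\<sigma>}} \<longrightarrow>
                  ((\<sigma> [^]\<^bsub>G\<^esub> k) <#\<^bsub>G\<^esub> Hsub G s n (int i)) \<inter>
                  ((inv\<^bsub>G\<^esub> (u j) <#\<^bsub>G\<^esub> N) #>\<^bsub>G\<^esub> u j) = {})"
  shows "acoptic (qfaces G s n N) qle fst n"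
proof -
  interpret quotient_flag_action G s n N act
    by (intro quotient_flag_action.intro Wstr Nsub Qpoly Qact Nstab)
  show ?thesis
    unfolding acoptic_def
  proof (intro allI impI ballI)
    fix \<pi> :: "nat \<Rightarrow> nat" and \<Phi> and a b i :: int
    assume \<pi>: "bij_betw \<pi> {..<n} {..<n}" and \<Phi>: "\<Phi> \<in> flags" and i: "0 \<le> i \<and> i < int n"
    let ?seq = "petrie_seq Fs qle (petrie_map Fs qle fst \<pi> n) \<Phi>" and ?\<sigma> = "coxeter_word G s \<pi> n"
    have \<sigma>: "?\<sigma> \<in> carrier G" using coxeter_word_in_carrier[OF \<pi>] .
    have cox: "coxeter_element G s n ?\<sigma>" unfolding coxeter_element_def coxeter_word_def using \<pi> by blast
    have ni: "nat i < n" "int (nat i) = i" using i by auto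
    have "?seq a \<in> flags" using petrie_seq_coxeter[OF \<pi> \<Phi>] act_in_pflags[OF \<Phi>] \<sigma> by simp
    from ex1_implies_ex[OF reps[rule_format, OF this]] obtain j f where j: "j \<in> {1..r}"
      and f: "f \<in> poset_aut Fs qle" and seq_a: "?seq a = f ` act base_flag (u j)"
      by blast
    assume "face_of_rank fst (?seq a) i = face_of_rank fst (?seq b) i"
    then have "act (?seq a) (?\<sigma> [^]\<^bsub>G\<^esub> (b - a)) = ?seq a"
      unfolding petrie_seq_coxeter_diff[OF \<pi> \<Phi>, of b a] seq_a
    proof (intro poset_aut_act_pow_fixed_of_face_eq[OF Wfin _ \<sigma> ni(1) f])
      show "u j \<in> carrier G" using uG j by blast
      show "\<forall>k::nat. 1 \<le> k \<and> k < card {act (act base_flag (u j)) \<alpha> | \<alpha>. \<alpha> \<in> generate G {?\<sigma>}} \<longrightarrow>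
          ((?\<sigma> [^]\<^bsub>G\<^esub> k) <#\<^bsub>G\<^esub> H (int (nat i))) \<inter> ((inv\<^bsub>G\<^esub> u j <#\<^bsub>G\<^esub> N) #>\<^bsub>G\<^esub> u j) = {}"
        using cond[rule_format, OF cox ni(1) j] by blast
    qed (use ni(2) in simp)
    then show "?seq a = ?seq b" using petrie_seq_coxeter_diff[OF \<pi> \<Phi>, of b a] by simp
  qed
qed

end
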